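(* Let $n_p\ge 1$, let $P\subset\mathbb{R}^{n_p}$ be convex and compact, let $f:\mathbb{R}\times\mathbb{R}^{n_p}\to\mathbb{R}$, let $Q\subset P$ be the (assumed nonempty) set of $\mathbf{p}\in P$ for which $f(z,\mathbf{p})=0$ has at least one solution $z\in\mathbb{R}$, and let $x:Q\to\mathbb{R}$ satisfy $f(x(\mathbf{p}),\mathbf{p})=0$ for all $\mathbf{p}\in Q$. Let $X:=[x^{L},x^{U}]$ be an interval with $x(\mathbf{p})\in X$ for all $\mathbf{p}\in Q$. Suppose $f^{cv}$ and $f^{cc}$ are convex and concave relaxations of $f$ on $X\times P$ which are piecewise affine of the form $$f^{cv}(\xi,\mathbf{p})=\max\{[\mathbf{a}^{cv,i}]^\top\mathbf{p}+\alpha^{cv,i}\xi+b^{cv,i}: i\in\{1,\dots,k\}\},\qquad f^{cc}(\xi,\mathbf{p})=\min\{[\mathbf{a}^{cc,j}]^\top\mathbf{p}+\alpha^{cc,j}\xi+b^{cc,j}: j\in\{1,\dots,\ell\}\},$$ with $\mathbf{a}^{cv,i},\mathbf{a}^{cc,j}\in\mathbb{R}^{n_p}$ and $\alpha^{cv,i},b^{cv,i},\alpha^{cc,j},b^{cc,j}\in\mathbb{R}$. Let $K^-=\{i:\alpha^{cv,i}<0\}$, $K^+=\{i:\alpha^{cv,i}>0\}$, $L^-=\{j:\alpha^{cc,j}<0\}$, $L^+=\{j:\alpha^{cc,j}>0\}$, and for each $i,j$ define $g_i(\mathbf{p}):=\frac{-1}{\alpha^{cv,i}}([\mathbf{a}^{cv,i}]^\top\mathbf{p}+b^{cv,i})$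 and $\gamma_j(\mathbf{p}):=\frac{-1}{\alpha^{cc,j}}([\mathbf{a}^{cc,j}]^\top\mathbf{p}+b^{cc,j})$ (for the indices where the denominators are nonzero). Define $h^{cv},h^{cc}:P\to\mathbb{R}$ by $$h^{cv}(\mathbf{p}):=\max\big(\{g_i(\mathbf{p}):i\in K^-\}\cup\{\gamma_j(\mathbf{p}):j\in L^+\}\big),\qquad h^{cc}(\mathbf{p}):=\min\big(\{g_i(\mathbf{p}):i\in K^+\}\cup\{\gamma_j(\mathbf{p}):j\in L^-\}\big),$$ and define $x^{cv}(\mathbf{p}):=\max\{x^{L},h^{cv}(\mathbf{p})\}$ and $x^{cc}(\mathbf{p}):=\min\{x^{U},h^{cc}(\mathbf{p})\}$. Then for any $\mathbf{p}\in\mathrm{int}(Q)$, a subgradient $\mathbf{s}^{cv}\in\mathbb{R}^{n_p}$ of $x^{cv}$ at $\mathbf{p}$ is given by: $\mathbf{s}^{cv}:=\mathbf{0}$ if $x^{cv}(\mathbf{p})=x^{L}$; otherwise, if $x^{cv}(\mathbf{p})=g_i(\mathbf{p})$ for some $i\in K^-$, then $\mathbf{s}^{cv}:=-\mathbf{a}^{cv,i}/\alpha^{cv,i}$; otherwise there exists $j\in L^+$ with $x^{cv}(\mathbf{p})=\gamma_j(\mathbf{p})$, and $\mathbf{s}^{cv}:=-\mathbf{a}^{cc,j}/\alpha^{cc,j}$. Similarly, a subgradient $\mathbf{s}^{cc}\in\mathbb{R}^{n_p}$ of the concave function $x^{cc}$ at $\mathbf{p}$ is given by: $\mathbf{s}^{cc}:=\mathbf{0}$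 if $x^{cc}(\mathbf{p})=x^{U}$; otherwise, if $x^{cc}(\mathbf{p})=\gamma_j(\mathbf{p})$ for some $j\in L^-$, then $\mathbf{s}^{cc}:=-\mathbf{a}^{cc,j}/\alpha^{cc,j}$; otherwise there exists $i\in K^+$ with $x^{cc}(\mathbf{p})=g_i(\mathbf{p})$, and $\mathbf{s}^{cc}:=-\mathbf{a}^{cv,i}/\alpha^{cv,i}$.
   Context: A convex relaxation of $f$ on $X\times P$ is a convex function $f^{cv}$ on $X\times P$ with $f^{cv}\le f$ there; a concave relaxation is a concave $f^{cc}$ with $f^{cc}\ge f$. The functions $x^{cv}$, $x^{cc}$ are (closed-form expressions of) the implicit function relaxations $x^{cv}(\mathbf{p})=\inf\{\xi\in X: f^{cv}(\xi,\mathbf{p})\le 0\le f^{cc}(\xi,\mathbf{p})\}$ and $x^{cc}(\mathbf{p})=\sup\{\xi\in X: f^{cv}(\xi,\mathbf{p})\le 0\le f^{cc}(\xi,\mathbf{p})\}$. A subgradient of a convex function $\phi$ at $\mathbf{p}$ is $\mathbf{s}$ with $\phi(\boldsymbol{\eta})\ge\phi(\mathbf{p})+\langle\mathbf{s},\boldsymbol{\eta}-\mathbf{p}\rangle$ for all $\boldsymbol{\eta}$ in the domain; for a concave $\phi$ it is $\mathbf{s}$ with $\phi(\boldsymbol{\eta})\le\phi(\mathbf{p})+\langle\mathbf{s},\boldsymbol{\eta}-\mathbf{p}\rangle$. *)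

theory Defs
  imports "HOL-Analysis.Analysis"
begin

definition pw_max :: "(nat \<Rightarrow> real^'n) \<Rightarrow> (nat \<Rightarrow> real) \<Rightarrow> (nat \<Rightarrow> real) \<Rightarrow> nat
    \<Rightarrow> real \<Rightarrow> real^'n \<Rightarrow> real" where
  "pw_max a al b k xi p = Max {a i \<bullet> p + al i * xi + b i | i. i \<in> {1..k}}"

definition pw_min :: "(nat \<Rightarrow> real^'n) \<Rightarrow> (nat \<Rightarrow> real) \<Rightarrow> (nat \<Rightarrow> real) \<Rightarrow> nat
    \<Rightarrow> real \<Rightarrow> real^'n \<Rightarrow> real" where
  "pw_min a al b l xi p = Min {a j \<bullet> p + al j * xi + b j | j. j \<in> {1..l}}"

definition aff_root :: "real^'n \<Rightarrow> real \<Rightarrow> real \<Rightarrow> real^'n \<Rightarrow> real" where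
  "aff_root a al b p = (-1 / al) * (a \<bullet> p + b)"

(* x^cv(p) = max{x^L, h^cv(p)}, h^cv = max over g_i (i in K^-) and gamma_j (j in L^+);
   written as one finite Max (an empty index set contributes nothing, i.e. h^cv = -infinity) *)
definition xcv_fun :: "real \<Rightarrow> (nat \<Rightarrow> real^'n) \<Rightarrow> (nat \<Rightarrow> real) \<Rightarrow> (nat \<Rightarrow> real) \<Rightarrow> nat
    \<Rightarrow> (nat \<Rightarrow> real^'n) \<Rightarrow> (nat \<Rightarrow> real) \<Rightarrow> (nat \<Rightarrow> real) \<Rightarrow> nat \<Rightarrow> real^'n \<Rightarrow> real" where
  "xcv_fun xL acv alcv bcv k acc alcc bcc l p =
     Max ({xL}
          \<union> {aff_root (acv i) (alcv i) (bcv i) p | i. i \<in> {1..k} \<and> alcv i < 0}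
          \<union> {aff_root (acc j) (alcc j) (bcc j) p | j. j \<in> {1..l} \<and> alcc j > 0})"

definition xcc_fun :: "real \<Rightarrow> (nat \<Rightarrow> real^'n) \<Rightarrow> (nat \<Rightarrow> real) \<Rightarrow> (nat \<Rightarrow> real) \<Rightarrow> nat
    \<Rightarrow> (nat \<Rightarrow> real^'n) \<Rightarrow> (nat \<Rightarrow> real) \<Rightarrow> (nat \<Rightarrow> real) \<Rightarrow> nat \<Rightarrow> real^'n \<Rightarrow> real" where
  "xcc_fun xU acv alcv bcv k acc alcc bcc l p =
     Min ({xU}
          \<union> {aff_root (acv i) (alcv i) (bcv i) p | i. i \<in> {1..k} \<and> alcv i > 0}
          \<union> {aff_root (acc j) (alcc j) (bcc j) p | j. j \<in> {1..l} \<and> alcc j < 0})"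

definition is_cv_subgrad :: "'a::real_inner set \<Rightarrow> ('a \<Rightarrow> real) \<Rightarrow> 'a \<Rightarrow> 'a \<Rightarrow> bool" where
  "is_cv_subgrad S phi p s \<longleftrightarrow> (\<forall>eta\<in>S. phi eta \<ge> phi p + s \<bullet> (eta - p))"

definition is_cc_subgrad :: "'a::real_inner set \<Rightarrow> ('a \<Rightarrow> real) \<Rightarrow> 'a \<Rightarrow> 'a \<Rightarrow> bool" where
  "is_cc_subgrad S phi p s \<longleftrightarrow> (\<forall>eta\<in>S. phi eta \<le> phi p + s \<bullet> (eta - p))"

end

theory Submission
  imports Defs
begin

text \<open>Both \<open>x\<^sup>c\<^sup>v\<close> and \<open>x\<^sup>c\<^sup>c\<close> are pointwise extrema of finitely many affine functions of \<open>p\<close>: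
  the constant bound and the roots \<open>g\<^sub>i\<close>, \<open>\<gamma>\<^sub>j\<close>. A piece attaining the maximum (minimum) at \<open>p\<close>
  is an affine minorant (majorant) touching the function at \<open>p\<close>, so its gradient is a
  subgradient. This holds on all of \<open>P\<close>.\<close>

lemma is_cv_subgrad_of_affine_minorant:
  assumes "\<And>eta. eta \<in> S \<Longrightarrow> g eta \<le> phi eta"
    and "g p = phi p"
    and "\<And>eta. g eta = g p + s \<bullet> (eta - p)"
  shows "is_cv_subgrad S phi p s"
  unfolding is_cv_subgrad_def using assms by metis

lemma is_cc_subgrad_of_affine_majorant:
  assumes "\<And>eta. eta \<in> S \<Longrightarrow> phi eta \<le> g eta"
    and "g p = phi p"
    and "\<And>eta. g eta = g p + s \<bullet> (eta - p)"
  shows "is_cc_subgrad S phi p s"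
  unfolding is_cc_subgrad_def using assms by metis

lemma aff_root_linearization:
  "aff_root a al b eta = aff_root a al b p + (- (1 / al) *\<^sub>R a) \<bullet> (eta - p)"
  unfolding aff_root_def by (simp add: inner_diff_right algebra_simps)

lemma finite_xcv_candidates:
  fixes k l :: nat
  shows "finite ({xL}
      \<union> {aff_root (acv i) (alcv i) (bcv i) p | i. i \<in> {1..k} \<and> alcv i < 0}
      \<union> {aff_root (acc j) (alcc j) (bcc j) p | j. j \<in> {1..l} \<and> alcc j > 0})"
  by (intro finite_UnI finite.insertI finite.emptyI finite_image_set finite_Collect_conjI disjI1)
    simp_all

lemma finite_xcc_candidates:
  fixes k l :: nat
  shows "finite ({xU}
      \<union> {aff_root (acv i) (alcv i) (bcv i) p | i. i \<in> {1..k} \<and> alcv i > 0}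
      \<union> {aff_root (acc j) (alcc j) (bcc j) p | j. j \<in> {1..l} \<and> alcc j < 0})"
  by (intro finite_UnI finite.insertI finite.emptyI finite_image_set finite_Collect_conjI disjI1)
    simp_all

lemma xcv_fun_ge_lower:
  "xL \<le> xcv_fun xL acv alcv bcv k acc alcc bcc l eta"
  unfolding xcv_fun_def by (rule Max_ge[OF finite_xcv_candidates]) simp

lemma xcv_fun_ge_aff_root_cv:
  "i \<in> {1..k} \<Longrightarrow> alcv i < 0 \<Longrightarrow>
    aff_root (acv i) (alcv i) (bcv i) eta \<le> xcv_fun xL acv alcv bcv k acc alcc bcc l eta"
  unfolding xcv_fun_def by (rule Max_ge[OF finite_xcv_candidates]) blast

lemma xcv_fun_ge_aff_root_cc:
  "j \<in> {1..l} \<Longrightarrow> alcc j > 0 \<Longrightarrow>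
    aff_root (acc j) (alcc j) (bcc j) eta \<le> xcv_fun xL acv alcv bcv k acc alcc bcc l eta"
  unfolding xcv_fun_def by (rule Max_ge[OF finite_xcv_candidates]) blast

lemma xcv_fun_cases:
  "xcv_fun xL acv alcv bcv k acc alcc bcc l p = xL
   \<or> (\<exists>i\<in>{1..k}. alcv i < 0 \<and>
        xcv_fun xL acv alcv bcv k acc alcc bcc l p = aff_root (acv i) (alcv i) (bcv i) p)
   \<or> (\<exists>j\<in>{1..l}. alcc j > 0 \<and>
        xcv_fun xL acv alcv bcv k acc alcc bcc l p = aff_root (acc j) (alcc j) (bcc j) p)"
  using Max_in[OF finite_xcv_candidates, of xL acv alcv bcv p k acc alcc bcc l]
  unfolding xcv_fun_def by blast

lemma xcc_fun_le_upper:
  "xcc_fun xU acv alcv bcv k acc alcc bcc l eta \<le> xU"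
  unfolding xcc_fun_def by (rule Min_le[OF finite_xcc_candidates]) simp

lemma xcc_fun_le_aff_root_cv:
  "i \<in> {1..k} \<Longrightarrow> alcv i > 0 \<Longrightarrow>
    xcc_fun xU acv alcv bcv k acc alcc bcc l eta \<le> aff_root (acv i) (alcv i) (bcv i) eta"
  unfolding xcc_fun_def by (rule Min_le[OF finite_xcc_candidates]) blast

lemma xcc_fun_le_aff_root_cc:
  "j \<in> {1..l} \<Longrightarrow> alcc j < 0 \<Longrightarrow>
    xcc_fun xU acv alcv bcv k acc alcc bcc l eta \<le> aff_root (acc j) (alcc j) (bcc j) eta"
  unfolding xcc_fun_def by (rule Min_le[OF finite_xcc_candidates]) blast

lemma xcc_fun_cases:
  "xcc_fun xU acv alcv bcv k acc alcc bcc l p = xU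
   \<or> (\<exists>j\<in>{1..l}. alcc j < 0 \<and>
        xcc_fun xU acv alcv bcv k acc alcc bcc l p = aff_root (acc j) (alcc j) (bcc j) p)
   \<or> (\<exists>i\<in>{1..k}. alcv i > 0 \<and>
        xcc_fun xU acv alcv bcv k acc alcc bcc l p = aff_root (acv i) (alcv i) (bcv i) p)"
  using Min_in[OF finite_xcc_candidates, of xU acv alcv bcv p k acc alcc bcc l]
  unfolding xcc_fun_def by blast

lemma is_cv_subgrad_xcv_fun_lower:
  assumes "xcv_fun xL acv alcv bcv k acc alcc bcc l p = xL"
  shows "is_cv_subgrad S (xcv_fun xL acv alcv bcv k acc alcc bcc l) p 0"
  by (rule is_cv_subgrad_of_affine_minorant[where g = "\<lambda>_. xL"])
    (simp_all add: xcv_fun_ge_lower assms)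

lemma is_cv_subgrad_xcv_fun_aff_root_cv:
  assumes "i \<in> {1..k}" "alcv i < 0"
    and "xcv_fun xL acv alcv bcv k acc alcc bcc l p = aff_root (acv i) (alcv i) (bcv i) p"
  shows "is_cv_subgrad S (xcv_fun xL acv alcv bcv k acc alcc bcc l) p (- (1 / alcv i) *\<^sub>R acv i)"
  by (rule is_cv_subgrad_of_affine_minorant[where g = "aff_root (acv i) (alcv i) (bcv i)",
        OF xcv_fun_ge_aff_root_cv[where alcv = alcv, OF assms(1,2)] assms(3)[symmetric] aff_root_linearization])

lemma is_cv_subgrad_xcv_fun_aff_root_cc:
  assumes "j \<in> {1..l}" "alcc j > 0"
    and "xcv_fun xL acv alcv bcv k acc alcc bcc l p = aff_root (acc j) (alcc j) (bcc j) p"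
  shows "is_cv_subgrad S (xcv_fun xL acv alcv bcv k acc alcc bcc l) p (- (1 / alcc j) *\<^sub>R acc j)"
  by (rule is_cv_subgrad_of_affine_minorant[where g = "aff_root (acc j) (alcc j) (bcc j)",
        OF xcv_fun_ge_aff_root_cc[where alcc = alcc, OF assms(1,2)] assms(3)[symmetric] aff_root_linearization])

lemma is_cc_subgrad_xcc_fun_upper:
  assumes "xcc_fun xU acv alcv bcv k acc alcc bcc l p = xU"
  shows "is_cc_subgrad S (xcc_fun xU acv alcv bcv k acc alcc bcc l) p 0"
  by (rule is_cc_subgrad_of_affine_majorant[where g = "\<lambda>_. xU"])
    (simp_all add: xcc_fun_le_upper assms)

lemma is_cc_subgrad_xcc_fun_aff_root_cc:
  assumes "j \<in> {1..l}" "alcc j < 0"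
    and "xcc_fun xU acv alcv bcv k acc alcc bcc l p = aff_root (acc j) (alcc j) (bcc j) p"
  shows "is_cc_subgrad S (xcc_fun xU acv alcv bcv k acc alcc bcc l) p (- (1 / alcc j) *\<^sub>R acc j)"
  by (rule is_cc_subgrad_of_affine_majorant[where g = "aff_root (acc j) (alcc j) (bcc j)",
        OF xcc_fun_le_aff_root_cc[where alcc = alcc, OF assms(1,2)] assms(3)[symmetric] aff_root_linearization])

lemma is_cc_subgrad_xcc_fun_aff_root_cv:
  assumes "i \<in> {1..k}" "alcv i > 0"
    and "xcc_fun xU acv alcv bcv k acc alcc bcc l p = aff_root (acv i) (alcv i) (bcv i) p"
  shows "is_cc_subgrad S (xcc_fun xU acv alcv bcv k acc alcc bcc l) p (- (1 / alcv i) *\<^sub>R acv i)"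
  by (rule is_cc_subgrad_of_affine_majorant[where g = "aff_root (acv i) (alcv i) (bcv i)",
        OF xcc_fun_le_aff_root_cv[where alcv = alcv, OF assms(1,2)] assms(3)[symmetric] aff_root_linearization])

theorem proposition4p1:
  fixes P :: "(real^'n) set"
    and f :: "real \<Rightarrow> real^'n \<Rightarrow> real"
    and x :: "real^'n \<Rightarrow> real"
    and xL xU :: real
    and k l :: nat
    and acv acc :: "nat \<Rightarrow> real^'n"
    and alcv bcv alcc bcc :: "nat \<Rightarrow> real"
    and p :: "real^'n"
  defines "Q \<equiv> {q \<in> P. \<exists>z. f z q = 0}"
    and "xcv \<equiv> xcv_fun xL acv alcv bcv k acc alcc bcc l"
    and "xcc \<equiv> xcc_fun xU acv alcv bcv k acc alcc bcc l"
  assumes "convex P" and "compact P"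
    and "Q \<noteq> {}"
    and "\<forall>q\<in>Q. f (x q) q = 0"
    and "\<forall>q\<in>Q. x q \<in> {xL..xU}"
    and "k \<ge> 1" and "l \<ge> 1"
    and "convex_on ({xL..xU} \<times> P) (\<lambda>(xi, q). pw_max acv alcv bcv k xi q)"
    and "concave_on ({xL..xU} \<times> P) (\<lambda>(xi, q). pw_min acc alcc bcc l xi q)"
    and "\<forall>xi\<in>{xL..xU}. \<forall>q\<in>P. pw_max acv alcv bcv k xi q \<le> f xi q"
    and "\<forall>xi\<in>{xL..xU}. \<forall>q\<in>P. f xi q \<le> pw_min acc alcc bcc l xi q"
    and "p \<in> interior Q"
  shows
    "(xcv p = xL \<longrightarrow> is_cv_subgrad P xcv p 0)
     \<and> (xcv p \<noteq> xL \<longrightarrow>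
          (\<forall>i\<in>{1..k}. alcv i < 0 \<longrightarrow> xcv p = aff_root (acv i) (alcv i) (bcv i) p \<longrightarrow>
              is_cv_subgrad P xcv p (- (1 / alcv i) *\<^sub>R acv i))
        \<and> ((\<not> (\<exists>i\<in>{1..k}. alcv i < 0 \<and> xcv p = aff_root (acv i) (alcv i) (bcv i) p)) \<longrightarrow>
              (\<exists>j\<in>{1..l}. alcc j > 0 \<and> xcv p = aff_root (acc j) (alcc j) (bcc j) p)
            \<and> (\<forall>j\<in>{1..l}. alcc j > 0 \<longrightarrow> xcv p = aff_root (acc j) (alcc j) (bcc j) p \<longrightarrow>
                 is_cv_subgrad P xcv p (- (1 / alcc j) *\<^sub>R acc j))))
     \<and> (xcc p = xU \<longrightarrow> is_cc_subgrad P xcc p 0)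
     \<and> (xcc p \<noteq> xU \<longrightarrow>
          (\<forall>j\<in>{1..l}. alcc j < 0 \<longrightarrow> xcc p = aff_root (acc j) (alcc j) (bcc j) p \<longrightarrow>
              is_cc_subgrad P xcc p (- (1 / alcc j) *\<^sub>R acc j))
        \<and> ((\<not> (\<exists>j\<in>{1..l}. alcc j < 0 \<and> xcc p = aff_root (acc j) (alcc j) (bcc j) p)) \<longrightarrow>
              (\<exists>i\<in>{1..k}. alcv i > 0 \<and> xcc p = aff_root (acv i) (alcv i) (bcv i) p)
            \<and> (\<forall>i\<in>{1..k}. alcv i > 0 \<longrightarrow> xcc p = aff_root (acv i) (alcv i) (bcv i) p \<longrightarrow>
                 is_cc_subgrad P xcc p (- (1 / alcv i) *\<^sub>R acv i))))"
  unfolding xcv_def xcc_def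
proof (intro conjI impI ballI)
  show "\<exists>j\<in>{1..l}. alcc j > 0 \<and>
      xcv_fun xL acv alcv bcv k acc alcc bcc l p = aff_root (acc j) (alcc j) (bcc j) p"
    if "xcv_fun xL acv alcv bcv k acc alcc bcc l p \<noteq> xL"
      and "\<not> (\<exists>i\<in>{1..k}. alcv i < 0 \<and>
        xcv_fun xL acv alcv bcv k acc alcc bcc l p = aff_root (acv i) (alcv i) (bcv i) p)"
    using that xcv_fun_cases by blast
  show "\<exists>i\<in>{1..k}. alcv i > 0 \<and>
      xcc_fun xU acv alcv bcv k acc alcc bcc l p = aff_root (acv i) (alcv i) (bcv i) p"
    if "xcc_fun xU acv alcv bcv k acc alcc bcc l p \<noteq> xU"
      and "\<not> (\<exists>j\<in>{1..l}. alcc j < 0 \<and>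
        xcc_fun xU acv alcv bcv k acc alcc bcc l p = aff_root (acc j) (alcc j) (bcc j) p)"
    using that xcc_fun_cases by blast
qed (blast intro: is_cv_subgrad_xcv_fun_lower is_cv_subgrad_xcv_fun_aff_root_cv
    is_cv_subgrad_xcv_fun_aff_root_cc is_cc_subgrad_xcc_fun_upper
    is_cc_subgrad_xcc_fun_aff_root_cc is_cc_subgrad_xcc_fun_aff_root_cv)+

end
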